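(* Let $E=\{E_{\bar a}:\bar a\in[\lambda]^{<\omega}\}$ be a system of $\kappa$-complete ultrafilters, $E_{\bar a}$ on ${}^{\bar a}\kappa$, satisfying coherence. The following are equivalent: (1) $E$ is well-founded. (2) Łoś' Theorem holds for $\mathbb{L}_{\kappa,\omega}(Q^{WF})$-formulas: for every $\bar a\in[\lambda]^{<\omega}$, every family of $\tau$-structures $\{M_s:s\in{}^{\bar a}\kappa\}$, every $\phi(x_1,\dots,x_n)\in\mathbb{L}_{\kappa,\omega}(Q^{WF})(\tau)$ and all $[\bar b_1,f_1]_E,\dots,[\bar b_n,f_n]_E\in\prod M_s/E$, we have $\prod M_s/E\models\phi([\bar b_1,f_1]_E,\dots,[\bar b_n,f_n]_E)$ iff $\{s\in{}^{\bigcup_i\bar b_i}\kappa: M_{s\restriction\bar a}\models\phi(f_1(s\restriction\bar b_1),\dots,f_n(s\restriction\bar b_n))\}\in E_{\bigcup_i\bar b_i}$.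
   Context: Coherence: for $\bar a\subseteq\bar b$, $X\in E_{\bar a}$ iff $\{s\in{}^{\bar b}\kappa: s\restriction\bar a\in X\}\in E_{\bar b}$. Well-foundedness: for any countably many $\bar a_n\in[\lambda]^{<\omega}$ and $X_n\in E_{\bar a_n}$ there is $h:\bigcup_n\bar a_n\to\kappa$ with $h\restriction\bar a_n\in X_n$ for all $n$. Extender product: given $\bar a$ and $\tau$-structures $M_s$ ($s\in{}^{\bar a}\kappa$), $\prod M_s/E$ is the direct limit of the ultraproducts $\prod_{s\in{}^{\bar b}\kappa}M_{s\restriction\bar a}/E_{\bar b}$ ($\bar a\subseteq\bar b\in[\lambda]^{<\omega}$) under the maps induced by restriction; its elements are classes $[\bar b,f]_E$ with $\bar a\subseteq\bar b$ and $f$ a function on ${}^{\bar b}\kappa$ with $f(s)\in M_{s\restriction\bar a}$, where $[\bar b,f]_E=[\bar c,g]_E$ iff $\{s\in{}^{\bar b\cup\bar c}\kappa:f(s\restriction\bar b)=g(s\restriction\bar c)\}\in E_{\bar b\cup\bar c}$ (relations defined similarly). $\mathbb{L}_{\kappa,\omega}(Q^{WF})$ is $\mathbb{L}_{\kappa,\omega}$ with the quantifier $Q^{WF}$: $Q^{WF}xy\,\phi(x,y,\bar z)$ holds iff there is no sequence $(x_n)_{n<\omega}$ with $\phi(x_{n+1},x_n,\bar z)$ for all $n$. *)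

theory Defs
  imports Main
begin

datatype 'f tm = Var nat | Fn 'f "'f tm list"

text \<open>Infinitary conjunctions are indexed by subsets of the type 'k
  (whose cardinality is kappa); well-formedness (wff) demands fewer than kappa conjuncts.\<close>
datatype ('f, 'r, 'k) fm =
    Rel 'r "'f tm list"
  | Eq "'f tm" "'f tm"
  | Neg "('f, 'r, 'k) fm"
  | BigAnd "'k set" "'k \<Rightarrow> ('f, 'r, 'k) fm"
  | Ex nat "('f, 'r, 'k) fm"
  | QWF nat nat "('f, 'r, 'k) fm"

primrec fvt :: "'f tm \<Rightarrow> nat set" where
  "fvt (Var x) = {x}"
| "fvt (Fn f ts) = \<Union> (set (map fvt ts))"

primrec fv :: "('f, 'r, 'k) fm \<Rightarrow> nat set" where
  "fv (Rel r ts) = \<Union> (set (map fvt ts))"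
| "fv (Eq t u) = fvt t \<union> fvt u"
| "fv (Neg \<phi>) = fv \<phi>"
| "fv (BigAnd I F) = (\<Union>i\<in>I. fv (F i))"
| "fv (Ex x \<phi>) = fv \<phi> - {x}"
| "fv (QWF x y \<phi>) = fv \<phi> - {x, y}"

primrec wff :: "('f, 'r, 'k) fm \<Rightarrow> bool" where
  "wff (Rel r ts) = True"
| "wff (Eq t u) = True"
| "wff (Neg \<phi>) = wff \<phi>"
| "wff (BigAnd I F) = ((card_of I, card_of (UNIV :: 'k set)) \<in> ordLess \<and> (\<forall>i\<in>I. wff (F i)))"
| "wff (Ex x \<phi>) = wff \<phi>"
| "wff (QWF x y \<phi>) = wff \<phi>"

datatype ('f, 'r, 'm) struct =
  Struct (univ: "'m set") (fnI: "'f \<Rightarrow> 'm list \<Rightarrow> 'm") (relI: "'r \<Rightarrow> 'm list \<Rightarrow> bool")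

definition is_struct :: "('f, 'r, 'm) struct \<Rightarrow> bool" where
  "is_struct M \<longleftrightarrow> univ M \<noteq> {} \<and> (\<forall>f xs. set xs \<subseteq> univ M \<longrightarrow> fnI M f xs \<in> univ M)"

primrec evalt :: "('f, 'r, 'm) struct \<Rightarrow> (nat \<Rightarrow> 'm) \<Rightarrow> 'f tm \<Rightarrow> 'm" where
  "evalt M v (Var x) = v x"
| "evalt M v (Fn f ts) = fnI M f (map (evalt M v) ts)"

primrec sat :: "('f, 'r, 'm) struct \<Rightarrow> (nat \<Rightarrow> 'm) \<Rightarrow> ('f, 'r, 'k) fm \<Rightarrow> bool" where
  "sat M v (Rel r ts) = relI M r (map (evalt M v) ts)"
| "sat M v (Eq t u) = (evalt M v t = evalt M v u)"
| "sat M v (Neg \<phi>) = (\<not> sat M v \<phi>)"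
| "sat M v (BigAnd I F) = (\<forall>i\<in>I. sat M v (F i))"
| "sat M v (Ex x \<phi>) = (\<exists>a\<in>univ M. sat M (v(x := a)) \<phi>)"
| "sat M v (QWF x y \<phi>) =
     (\<not> (\<exists>g. (\<forall>j. g j \<in> univ M) \<and> (\<forall>j. sat M (v(x := g (Suc j), y := g j)) \<phi>)))"

text \<open>lambda is the type 'l, kappa is the type 'k. An element s of ^{a}kappa is a partial
  map with domain exactly a.\<close>
definition seqs :: "'l set \<Rightarrow> ('l \<rightharpoonup> 'k) set" where
  "seqs a = {s. dom s = a}"

definition ultrafilter_on :: "'a set \<Rightarrow> 'a set set \<Rightarrow> bool" where
  "ultrafilter_on X U \<longleftrightarrow>
     U \<subseteq> Pow X \<and> X \<in> U \<and> {} \<notin> U \<and>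
     (\<forall>A B. A \<in> U \<and> A \<subseteq> B \<and> B \<subseteq> X \<longrightarrow> B \<in> U) \<and>
     (\<forall>A B. A \<in> U \<and> B \<in> U \<longrightarrow> A \<inter> B \<in> U) \<and>
     (\<forall>A. A \<subseteq> X \<longrightarrow> A \<in> U \<or> X - A \<in> U)"

definition kappa_complete :: "('l \<rightharpoonup> 'k) set set \<Rightarrow> bool" where
  "kappa_complete U \<longleftrightarrow>
     (\<forall>F. F \<subseteq> U \<and> F \<noteq> {} \<and> (card_of F, card_of (UNIV :: 'k set)) \<in> ordLess \<longrightarrow> \<Inter>F \<in> U)"

definition extender_system :: "('l set \<Rightarrow> ('l \<rightharpoonup> 'k) set set) \<Rightarrow> bool" where
  "extender_system E \<longleftrightarrow>
     (\<forall>a. finite a \<longrightarrow> ultrafilter_on (seqs a) (E a) \<and> kappa_complete (E a))"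

definition coherent :: "('l set \<Rightarrow> ('l \<rightharpoonup> 'k) set set) \<Rightarrow> bool" where
  "coherent E \<longleftrightarrow>
     (\<forall>a b X. finite b \<and> a \<subseteq> b \<and> X \<subseteq> seqs a \<longrightarrow>
        (X \<in> E a \<longleftrightarrow> {s \<in> seqs b. s |` a \<in> X} \<in> E b))"

definition E_wellfounded :: "('l set \<Rightarrow> ('l \<rightharpoonup> 'k) set set) \<Rightarrow> bool" where
  "E_wellfounded E \<longleftrightarrow>
     (\<forall>(a :: nat \<Rightarrow> 'l set) X. (\<forall>n. finite (a n) \<and> X n \<in> E (a n)) \<longrightarrow>
        (\<exists>h. dom h = (\<Union>n. a n) \<and> (\<forall>n. h |` a n \<in> X n)))"

text \<open>Representatives [b,f]: b finite with a \<subseteq> b, f s \<in> M_{s|a} for s \<in> ^{b}kappa.\<close>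
definition valid_rep ::
  "('l set \<Rightarrow> ('l \<rightharpoonup> 'k) set set) \<Rightarrow> 'l set \<Rightarrow> (('l \<rightharpoonup> 'k) \<Rightarrow> ('f, 'r, 'm) struct)
     \<Rightarrow> 'l set \<times> (('l \<rightharpoonup> 'k) \<Rightarrow> 'm) \<Rightarrow> bool" where
  "valid_rep E a M p \<longleftrightarrow>
     finite (fst p) \<and> a \<subseteq> fst p \<and> (\<forall>s\<in>seqs (fst p). snd p s \<in> univ (M (s |` a)))"

definition eqv ::
  "('l set \<Rightarrow> ('l \<rightharpoonup> 'k) set set) \<Rightarrow> 'l set \<times> (('l \<rightharpoonup> 'k) \<Rightarrow> 'm)
     \<Rightarrow> 'l set \<times> (('l \<rightharpoonup> 'k) \<Rightarrow> 'm) \<Rightarrow> bool" where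
  "eqv E p q \<longleftrightarrow>
     {s \<in> seqs (fst p \<union> fst q). snd p (s |` fst p) = snd q (s |` fst q)} \<in> E (fst p \<union> fst q)"

definition cls ::
  "('l set \<Rightarrow> ('l \<rightharpoonup> 'k) set set) \<Rightarrow> 'l set \<Rightarrow> (('l \<rightharpoonup> 'k) \<Rightarrow> ('f, 'r, 'm) struct)
     \<Rightarrow> 'l set \<times> (('l \<rightharpoonup> 'k) \<Rightarrow> 'm) \<Rightarrow> ('l set \<times> (('l \<rightharpoonup> 'k) \<Rightarrow> 'm)) set" where
  "cls E a M p = {q. valid_rep E a M q \<and> eqv E p q}"

definition rep :: "'a set \<Rightarrow> 'a" where
  "rep x = (SOME p. p \<in> x)"

definition prod_univ ::
  "('l set \<Rightarrow> ('l \<rightharpoonup> 'k) set set) \<Rightarrow> 'l set \<Rightarrow> (('l \<rightharpoonup> 'k) \<Rightarrow> ('f, 'r, 'm) struct)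
     \<Rightarrow> ('l set \<times> (('l \<rightharpoonup> 'k) \<Rightarrow> 'm)) set set" where
  "prod_univ E a M = {cls E a M p | p. valid_rep E a M p}"

definition supp :: "'l set \<Rightarrow> ('l set \<times> (('l \<rightharpoonup> 'k) \<Rightarrow> 'm)) set list \<Rightarrow> 'l set" where
  "supp a xs = a \<union> \<Union> (set (map (\<lambda>x. fst (rep x)) xs))"

definition evrep :: "('l \<rightharpoonup> 'k) \<Rightarrow> ('l set \<times> (('l \<rightharpoonup> 'k) \<Rightarrow> 'm)) set \<Rightarrow> 'm" where
  "evrep s x = snd (rep x) (s |` fst (rep x))"

definition ext_prod ::
  "('l set \<Rightarrow> ('l \<rightharpoonup> 'k) set set) \<Rightarrow> 'l set \<Rightarrow> (('l \<rightharpoonup> 'k) \<Rightarrow> ('f, 'r, 'm) struct)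
     \<Rightarrow> ('f, 'r, ('l set \<times> (('l \<rightharpoonup> 'k) \<Rightarrow> 'm)) set) struct" where
  "ext_prod E a M =
     Struct (prod_univ E a M)
       (\<lambda>f xs. cls E a M (supp a xs, \<lambda>s. fnI (M (s |` a)) f (map (evrep s) xs)))
       (\<lambda>r xs. {s \<in> seqs (supp a xs). relI (M (s |` a)) r (map (evrep s) xs)} \<in> E (supp a xs))"

definition los ::
  "('l set \<Rightarrow> ('l \<rightharpoonup> 'k) set set) \<Rightarrow> 'l set \<Rightarrow> (('l \<rightharpoonup> 'k) \<Rightarrow> ('f, 'r, 'm) struct) \<Rightarrow> bool" where
  "los E a M \<longleftrightarrow>
     (\<forall>(\<phi> :: ('f, 'r, 'k) fm) ps.
        wff \<phi> \<and> fv \<phi> \<subseteq> {..<length ps} \<and> (\<forall>p\<in>set ps. valid_rep E a M p) \<longrightarrow>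
        (sat (ext_prod E a M) (\<lambda>i. cls E a M (ps ! i)) \<phi> \<longleftrightarrow>
         {s \<in> seqs (a \<union> \<Union> (set (map fst ps))).
            sat (M (s |` a)) (\<lambda>i. snd (ps ! i) (s |` fst (ps ! i))) \<phi>}
           \<in> E (a \<union> \<Union> (set (map fst ps)))))"

end

theory Submission
  imports Defs
begin

text \<open>
  If E is well-founded, Los's theorem is proved by induction on the formula. The connectives and
  the existential quantifier are handled as for ultrapowers: coherence lets representatives with
  different finite supports be compared on a common support, and kappa-completeness takes care of
  conjunctions of fewer than kappa formulas. The quantifier Q^WF is the only place where
  well-foundedness enters: if almost every factor is well-founded but the product has a descending
  sequence of classes, the set of well-founded coordinates and the sets on which consecutive
  representatives descend are countably many measure-one sets, and a single function h threading
  all of them exhibits a descending sequence in the well-founded factor at h.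

  Conversely, let (A n, X n) witness ill-foundedness. The partial threads of level n, i.e. the
  maps on A 0 \<union> ... \<union> A n whose restrictions to each A i lie in X i, are large at
  every level and form a tree without infinite branches. On the pairs (n, t) ordered by
  restriction of t this tree is well-founded in every factor, while in the product the classes of
  s \<mapsto> (n, s) descend.
\<close>

lemma restrict_restrict_subset: "b \<subseteq> c \<Longrightarrow> s |` c |` b = s |` b"
  by (simp add: Int_absorb1)

lemma restrict_in_seqs_iff: "s |` c \<in> seqs c \<longleftrightarrow> c \<subseteq> dom s"
  by (auto simp: seqs_def)

lemma seqs_restrict: "s \<in> seqs d \<Longrightarrow> c \<subseteq> d \<Longrightarrow> s |` c \<in> seqs c"
  by (auto simp: seqs_def)

lemma restrict_seqs_self: "s \<in> seqs c \<Longrightarrow> s |` c = s"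
  by (rule ext) (auto simp: seqs_def restrict_map_def dom_def)

lemma ultrafilter_on_subset: "ultrafilter_on X U \<Longrightarrow> A \<in> U \<Longrightarrow> A \<subseteq> X"
  unfolding ultrafilter_on_def by (elim conjE) auto

lemma ultrafilter_on_top: "ultrafilter_on X U \<Longrightarrow> X \<in> U"
  unfolding ultrafilter_on_def by (elim conjE)

lemma ultrafilter_on_empty: "ultrafilter_on X U \<Longrightarrow> {} \<notin> U"
  unfolding ultrafilter_on_def by (elim conjE)

lemma ultrafilter_on_mono:
  "ultrafilter_on X U \<Longrightarrow> A \<in> U \<Longrightarrow> A \<subseteq> B \<Longrightarrow> B \<subseteq> X \<Longrightarrow> B \<in> U"
  unfolding ultrafilter_on_def by (elim conjE) (simp only: simp_thms)

lemma ultrafilter_on_Int: "ultrafilter_on X U \<Longrightarrow> A \<in> U \<Longrightarrow> B \<in> U \<Longrightarrow> A \<inter> B \<in> U"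
  unfolding ultrafilter_on_def by (elim conjE) (simp only: simp_thms)

lemma ultrafilter_on_dichotomy: "ultrafilter_on X U \<Longrightarrow> A \<subseteq> X \<Longrightarrow> A \<in> U \<or> X - A \<in> U"
  unfolding ultrafilter_on_def by (elim conjE) (simp only: simp_thms)

lemma ultrafilter_on_Int_iff:
  "ultrafilter_on X U \<Longrightarrow> A \<in> U \<Longrightarrow> B \<subseteq> X \<Longrightarrow> B \<inter> A \<in> U \<longleftrightarrow> B \<in> U"
  by (meson inf_le1 ultrafilter_on_Int ultrafilter_on_mono)

lemma ultrafilter_on_Diff_iff:
  assumes "ultrafilter_on X U" "A \<subseteq> X"
  shows "X - A \<in> U \<longleftrightarrow> A \<notin> U"
proof
  assume "X - A \<in> U"
  then show "A \<notin> U"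
    using ultrafilter_on_Int[OF assms(1)] ultrafilter_on_empty[OF assms(1)] by fastforce
next
  assume "A \<notin> U"
  moreover have "A \<in> U \<or> X - A \<in> U" by (rule ultrafilter_on_dichotomy[OF assms])
  ultimately show "X - A \<in> U" by blast
qed

lemma ultrafilter_on_INT:
  assumes "ultrafilter_on X U" "finite I" "\<forall>i\<in>I. A i \<in> U"
  shows "X \<inter> (\<Inter>i\<in>I. A i) \<in> U"
  using assms(2,3)
proof (induction I rule: finite_induct)
  case empty
  then show ?case using ultrafilter_on_top[OF assms(1)] by simp
next
  case (insert i I)
  then have "A i \<inter> (X \<inter> (\<Inter>i\<in>I. A i)) \<in> U" using ultrafilter_on_Int[OF assms(1)] by simp
  moreover have "A i \<inter> (X \<inter> (\<Inter>i\<in>I. A i)) = X \<inter> (\<Inter>i\<in>insert i I. A i)" by auto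
  ultimately show ?case by simp
qed

lemma kappa_complete_INT:
  fixes U :: "('l \<rightharpoonup> 'k) set set"
  assumes "kappa_complete U" "I \<noteq> {}" "(card_of I, card_of (UNIV :: 'k set)) \<in> ordLess"
    and "\<forall>i\<in>I. A i \<in> U"
  shows "(\<Inter>i\<in>I. A i) \<in> U"
proof (rule assms(1)[unfolded kappa_complete_def, rule_format, OF conjI[OF _ conjI]])
  show "A ` I \<subseteq> U" "A ` I \<noteq> {}" using assms(2,4) by auto
  show "(card_of (A ` I), card_of (UNIV :: 'k set)) \<in> ordLess"
    by (rule ordLeq_ordLess_trans[OF card_of_image assms(3)])
qed

lemma evalt_cong: "(\<forall>i\<in>fvt t. v i = v' i) \<Longrightarrow> evalt M v t = evalt M v' t"
  by (induction t) (auto cong: map_cong)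

lemma evalt_in_univ: "is_struct M \<Longrightarrow> (\<forall>i\<in>fvt t. v i \<in> univ M) \<Longrightarrow> evalt M v t \<in> univ M"
proof (induction t)
  case (Fn f ts)
  then have "set (map (evalt M v) ts) \<subseteq> univ M" by auto
  then show ?case using Fn.prems(1) unfolding is_struct_def by simp
qed simp

lemma sat_cong: "(\<forall>i\<in>fv \<phi>. v i = v' i) \<Longrightarrow> sat M v \<phi> = sat M v' \<phi>"
proof (induction \<phi> arbitrary: v v')
  case (Rel r ts)
  have "map (evalt M v) ts = map (evalt M v') ts"
    using Rel evalt_cong[of _ v v' M] by (simp only: map_eq_conv) auto
  then show ?case by (simp del: map_eq_conv)
next
  case (Eq t u)
  then show ?case using evalt_cong[of t v v' M] evalt_cong[of u v v' M] by simp
next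
  case (Neg \<phi>)
  have "sat M v \<phi> = sat M v' \<phi>" by (rule Neg.IH) (use Neg.prems in simp)
  then show ?case by simp
next
  case (BigAnd I F)
  have "sat M v (F i) = sat M v' (F i)" if "i \<in> I" for i
    by (rule BigAnd.IH[OF rangeI]) (use BigAnd.prems that in auto)
  then show ?case by simp
next
  case (Ex x \<phi>)
  have "sat M (v(x := b)) \<phi> = sat M (v'(x := b)) \<phi>" for b
    by (rule Ex.IH) (use Ex.prems in auto)
  then show ?case by simp
next
  case (QWF x y \<phi>)
  have "sat M (v(x := b, y := c)) \<phi> = sat M (v'(x := b, y := c)) \<phi>" for b c
    by (rule QWF.IH) (use QWF.prems in auto)
  then show ?case by simp
qed

locale coherent_extender =
  fixes E :: "'l set \<Rightarrow> ('l \<rightharpoonup> 'k) set set"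
  assumes extender: "extender_system E" and coherent: "coherent E"
begin

lemma E_ultrafilter: "finite c \<Longrightarrow> ultrafilter_on (seqs c) (E c)"
  using extender by (simp add: extender_system_def)

lemma E_kappa_complete: "finite c \<Longrightarrow> kappa_complete (E c)"
  using extender by (simp add: extender_system_def)

lemma E_lift_iff: "finite d \<Longrightarrow> c \<subseteq> d \<Longrightarrow> X \<subseteq> seqs c \<Longrightarrow>
    X \<in> E c \<longleftrightarrow> {s \<in> seqs d. s |` c \<in> X} \<in> E d"
  using coherent unfolding coherent_def by blast

lemma E_lift_Collect_iff:
  assumes "finite d" "c \<subseteq> d"
  shows "{s \<in> seqs c. Q s} \<in> E c \<longleftrightarrow> {s \<in> seqs d. Q (s |` c)} \<in> E d"
proof -
  have "{s \<in> seqs d. s |` c \<in> {s \<in> seqs c. Q s}} = {s \<in> seqs d. Q (s |` c)}"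
    using seqs_restrict[OF _ assms(2)] by blast
  then show ?thesis using E_lift_iff[OF assms, of "{s \<in> seqs c. Q s}"] by simp
qed

lemma E_transfer:
  assumes d: "finite d" "c1 \<subseteq> d" "c2 \<subseteq> d" and A: "A \<in> E d"
    and eq: "\<And>s. s \<in> A \<Longrightarrow> Q1 (s |` c1) \<longleftrightarrow> Q2 (s |` c2)"
  shows "{s \<in> seqs c1. Q1 s} \<in> E c1 \<longleftrightarrow> {s \<in> seqs c2. Q2 s} \<in> E c2"
proof -
  note large_iff = ultrafilter_on_Int_iff[OF E_ultrafilter[OF d(1)] A]
  have "{s \<in> seqs d. Q1 (s |` c1)} \<inter> A = {s \<in> seqs d. Q2 (s |` c2)} \<inter> A"
    using eq by blast
  then show ?thesis
    using E_lift_Collect_iff[OF d(1,2), of Q1] E_lift_Collect_iff[OF d(1,3), of Q2]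
      large_iff[of "{s \<in> seqs d. Q1 (s |` c1)}"] large_iff[of "{s \<in> seqs d. Q2 (s |` c2)}"]
    by auto
qed

lemma eqv_iff_large:
  assumes "finite d" "fst p \<union> fst q \<subseteq> d"
  shows "eqv E p q \<longleftrightarrow> {s \<in> seqs d. snd p (s |` fst p) = snd q (s |` fst q)} \<in> E d"
  unfolding eqv_def using E_lift_Collect_iff[OF assms] by (simp add: Int_absorb1)

lemma eqv_refl: "finite (fst p) \<Longrightarrow> eqv E p p"
  unfolding eqv_def using ultrafilter_on_top[OF E_ultrafilter] by simp

lemma eqv_sym: "eqv E p q \<Longrightarrow> eqv E q p"
  unfolding eqv_def by (simp add: Un_commute eq_commute)

lemma eqv_trans:
  assumes "finite (fst p)" "finite (fst q)" "finite (fst r)" "eqv E p q" "eqv E q r"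
  shows "eqv E p r"
proof -
  let ?d = "fst p \<union> fst q \<union> fst r"
  have d: "finite ?d" using assms(1-3) by simp
  have "{s \<in> seqs ?d. snd p (s |` fst p) = snd q (s |` fst q)}
      \<inter> {s \<in> seqs ?d. snd q (s |` fst q) = snd r (s |` fst r)} \<in> E ?d"
    using assms(4,5) eqv_iff_large[OF d, of p q] eqv_iff_large[OF d, of q r]
      ultrafilter_on_Int[OF E_ultrafilter[OF d]] by auto
  then have "{s \<in> seqs ?d. snd p (s |` fst p) = snd r (s |` fst r)} \<in> E ?d"
    by (rule ultrafilter_on_mono[OF E_ultrafilter[OF d]]) auto
  then show ?thesis using eqv_iff_large[OF d, of p r] by auto
qed

lemma E_INT_iff:
  assumes c: "finite c" and I: "(card_of I, card_of (UNIV :: 'k set)) \<in> ordLess"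
    and X: "\<forall>i\<in>I. X i \<subseteq> seqs c"
  shows "seqs c \<inter> (\<Inter>i\<in>I. X i) \<in> E c \<longleftrightarrow> (\<forall>i\<in>I. X i \<in> E c)"
proof
  assume "seqs c \<inter> (\<Inter>i\<in>I. X i) \<in> E c"
  then show "\<forall>i\<in>I. X i \<in> E c"
    using ultrafilter_on_mono[OF E_ultrafilter[OF c]] X by blast
next
  assume all: "\<forall>i\<in>I. X i \<in> E c"
  show "seqs c \<inter> (\<Inter>i\<in>I. X i) \<in> E c"
  proof (cases "I = {}")
    case True
    then show ?thesis using ultrafilter_on_top[OF E_ultrafilter[OF c]] by simp
  next
    case False
    then have "(\<Inter>i\<in>I. X i) \<in> E c" by (rule kappa_complete_INT[OF E_kappa_complete[OF c] _ I all])
    moreover have "seqs c \<inter> (\<Inter>i\<in>I. X i) = (\<Inter>i\<in>I. X i)" using False X by blast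
    ultimately show ?thesis by simp
  qed
qed

lemma E_wellfounded_cons:
  fixes d :: "nat \<Rightarrow> 'l set"
  assumes wf: "E_wellfounded E" and W: "finite c" "W \<in> E c" and T: "\<forall>j. finite (d j) \<and> T j \<in> E (d j)"
  shows "\<exists>h. h |` c \<in> W \<and> (\<forall>j. h |` d j \<in> T j)"
proof -
  have "\<forall>n. finite (case_nat c d n) \<and> case_nat W T n \<in> E (case_nat c d n)"
    using W T by (simp split: nat.split)
  then obtain h where h: "\<forall>n. h |` case_nat c d n \<in> case_nat W T n"
    using wf unfolding E_wellfounded_def by blast
  have "h |` c \<in> W" using h[rule_format, of 0] by simp
  moreover have "h |` d j \<in> T j" for j using h[rule_format, of "Suc j"] by simp
  ultimately show ?thesis by blast
qed

end

section \<open>Los's theorem for well-founded extenders\<close>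

definition asg_at :: "('l \<rightharpoonup> 'k) \<Rightarrow> (nat \<Rightarrow> 'l set \<times> (('l \<rightharpoonup> 'k) \<Rightarrow> 'm)) \<Rightarrow> nat \<Rightarrow> 'm" where
  "asg_at s P i = snd (P i) (s |` fst (P i))"

lemma asg_at_upd: "asg_at s (P(x := q)) = (asg_at s P)(x := snd q (s |` fst q))"
  by (rule ext) (simp add: asg_at_def)

lemma asg_at_restrict: "fst (P i) \<subseteq> c \<Longrightarrow> asg_at (s |` c) P i = asg_at s P i"
  by (simp add: asg_at_def Int_absorb1)

locale extender_product = coherent_extender E for E :: "'l set \<Rightarrow> ('l \<rightharpoonup> 'k) set set" +
  fixes a :: "'l set" and M :: "('l \<rightharpoonup> 'k) \<Rightarrow> ('f, 'r, 'm) struct"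
  assumes finite_a: "finite a" and is_struct_M: "\<forall>s\<in>seqs a. is_struct (M s)"
begin

abbreviation "valid \<equiv> valid_rep E a M"
abbreviation "cl \<equiv> cls E a M"

definition supported_reps :: "nat set \<Rightarrow> 'l set \<Rightarrow> (nat \<Rightarrow> 'l set \<times> (('l \<rightharpoonup> 'k) \<Rightarrow> 'm)) \<Rightarrow> bool" where
  "supported_reps D c P \<longleftrightarrow> (\<forall>i\<in>D. valid (P i) \<and> fst (P i) \<subseteq> c)"

lemma supported_reps_mono: "supported_reps D c P \<Longrightarrow> c \<subseteq> d \<Longrightarrow> supported_reps D d P"
  unfolding supported_reps_def by blast

lemma supported_reps_upd:
  "supported_reps D c P \<Longrightarrow> valid q \<Longrightarrow> fst q \<subseteq> c \<Longrightarrow> supported_reps (insert x D) c (P(x := q))"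
  unfolding supported_reps_def by simp

lemma valid_finite: "valid p \<Longrightarrow> finite (fst p)"
  by (simp add: valid_rep_def)

lemma is_struct_at: "a \<subseteq> dom s \<Longrightarrow> is_struct (M (s |` a))"
  using is_struct_M by (simp add: restrict_in_seqs_iff[symmetric])

lemma univ_nonempty_at: "a \<subseteq> dom s \<Longrightarrow> \<exists>m. m \<in> univ (M (s |` a))"
  using is_struct_at unfolding is_struct_def by blast

lemma valid_val_in_univ:
  assumes "valid p" "fst p \<subseteq> dom s"
  shows "snd p (s |` fst p) \<in> univ (M (s |` a))"
proof -
  have "a \<subseteq> fst p" using assms(1) by (simp add: valid_rep_def)
  moreover have "s |` fst p \<in> seqs (fst p)" using assms(2) by (simp add: restrict_in_seqs_iff)
  then have "snd p (s |` fst p) \<in> univ (M (s |` fst p |` a))"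
    using assms(1) unfolding valid_rep_def by blast
  ultimately show ?thesis by (simp add: Int_absorb1)
qed

lemma valid_rep_choice:
  assumes c: "finite c" "a \<subseteq> c" and S: "S \<subseteq> seqs c"
    and ex: "\<forall>s\<in>S. \<exists>m\<in>univ (M (s |` a)). R s m"
  obtains w where "valid (c, w)" "\<forall>s\<in>S. R s (w s)"
proof -
  have "\<forall>s\<in>seqs c. \<exists>m. m \<in> univ (M (s |` a)) \<and> (s \<in> S \<longrightarrow> R s m)"
  proof
    fix s :: "'l \<rightharpoonup> 'k" assume s: "s \<in> seqs c"
    show "\<exists>m. m \<in> univ (M (s |` a)) \<and> (s \<in> S \<longrightarrow> R s m)"
    proof (cases "s \<in> S")
      case True
      then show ?thesis using ex by blast
    next
      case False
      then show ?thesis using univ_nonempty_at[of s] s c(2) by (auto simp: seqs_def)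
    qed
  qed
  then obtain w where w: "\<forall>s\<in>seqs c. w s \<in> univ (M (s |` a)) \<and> (s \<in> S \<longrightarrow> R s (w s))"
    by (rule bchoice[elim_format]) blast
  then have "valid (c, w)" using c by (simp add: valid_rep_def)
  then show ?thesis using that w S by blast
qed

lemma valid_rep_seq_choice:
  assumes c: "finite c" "a \<subseteq> c" and S: "S \<subseteq> seqs c"
    and ex: "\<forall>s\<in>S. \<exists>G. (\<forall>j. G j \<in> univ (M (s |` a))) \<and> R s G"
  obtains G where "\<And>j. valid (c, \<lambda>s. G s j)" "\<forall>s\<in>S. R s (G s)"
proof -
  have "\<forall>s\<in>seqs c. \<exists>G. (\<forall>j. G j \<in> univ (M (s |` a))) \<and> (s \<in> S \<longrightarrow> R s G)"
  proof
    fix s :: "'l \<rightharpoonup> 'k" assume s: "s \<in> seqs c"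
    show "\<exists>G. (\<forall>j. G j \<in> univ (M (s |` a))) \<and> (s \<in> S \<longrightarrow> R s G)"
    proof (cases "s \<in> S")
      case True
      then show ?thesis using ex by blast
    next
      case False
      then show ?thesis using univ_nonempty_at[of s] s c(2) by (auto simp: seqs_def)
    qed
  qed
  then obtain G where G: "\<forall>s\<in>seqs c. (\<forall>j. G s j \<in> univ (M (s |` a))) \<and> (s \<in> S \<longrightarrow> R s (G s))"
    by (rule bchoice[elim_format]) blast
  then have "valid (c, \<lambda>s. G s j)" for j using c by (simp add: valid_rep_def)
  then show ?thesis using that G S by blast
qed

lemma cls_eqI:
  assumes "finite (fst p)" "finite (fst q)" "eqv E p q"
  shows "cl p = cl q"
  unfolding cls_def
proof (rule Collect_cong, rule conj_cong)
  fix r assume "valid r"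
  note r = valid_finite[OF this]
  show "eqv E p r \<longleftrightarrow> eqv E q r"
    using eqv_trans[OF assms(2,1) r eqv_sym[OF assms(3)]] eqv_trans[OF assms(1,2) r assms(3)] by blast
qed (rule refl)

lemma self_in_cls: "valid p \<Longrightarrow> p \<in> cl p"
  by (simp add: cls_def eqv_refl valid_finite)

lemma cls_eq_iff:
  assumes "valid p" "valid q"
  shows "cl p = cl q \<longleftrightarrow> eqv E p q"
proof
  assume "cl p = cl q"
  then have "q \<in> cl p" using self_in_cls[OF assms(2)] by simp
  then show "eqv E p q" by (simp add: cls_def)
qed (rule cls_eqI[OF valid_finite[OF assms(1)] valid_finite[OF assms(2)]])

lemma rep_cls: "valid p \<Longrightarrow> valid (rep (cl p)) \<and> eqv E p (rep (cl p))"
proof -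
  assume "valid p"
  then have "rep (cl p) \<in> cl p" unfolding rep_def by (rule someI[of "\<lambda>q. q \<in> cl p", OF self_in_cls])
  then show ?thesis by (simp add: cls_def)
qed

lemma cls_in_univ: "valid p \<Longrightarrow> cl p \<in> univ (ext_prod E a M)"
  by (simp only: ext_prod_def prod_univ_def struct.sel mem_Collect_eq) blast

lemma univ_ext_prodE:
  assumes "x \<in> univ (ext_prod E a M)"
  obtains p where "valid p" "x = cl p"
  using assms by (auto simp: ext_prod_def prod_univ_def)

lemma finite_supp: "\<forall>p\<in>set ps. valid p \<Longrightarrow> finite (supp a (map cl ps))"
  using finite_a rep_cls valid_finite by (auto simp: supp_def)

lemma rep_cls_subset_supp: "p \<in> set ps \<Longrightarrow> fst (rep (cl p)) \<subseteq> supp a (map cl ps)"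
  by (auto simp: supp_def)

lemma evrep_restrict: "fst (rep x) \<subseteq> S \<Longrightarrow> evrep (s |` S) x = evrep s x"
  by (simp add: evrep_def Int_absorb1)

lemma evrep_cls_large:
  assumes ps: "\<forall>p\<in>set ps. valid p" and d: "finite d" "supp a (map cl ps) \<subseteq> d" "\<forall>p\<in>set ps. fst p \<subseteq> d"
  shows "{s \<in> seqs d. \<forall>p\<in>set ps. evrep s (cl p) = snd p (s |` fst p)} \<in> E d"
proof -
  let ?X = "\<lambda>p. {s \<in> seqs d. evrep s (cl p) = snd p (s |` fst p)}"
  have "?X p \<in> E d" if p: "p \<in> set ps" for p
  proof -
    have "eqv E (rep (cl p)) p" using rep_cls ps p eqv_sym by blast
    moreover have "fst (rep (cl p)) \<union> fst p \<subseteq> d" using d p rep_cls_subset_supp[OF p] by auto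
    ultimately show ?thesis unfolding evrep_def by (simp add: eqv_iff_large[OF d(1)])
  qed
  then have "seqs d \<inter> (\<Inter>p\<in>set ps. ?X p) \<in> E d"
    by (intro ultrafilter_on_INT[OF E_ultrafilter[OF d(1)] finite_set]) blast
  moreover have "seqs d \<inter> (\<Inter>p\<in>set ps. ?X p) = {s \<in> seqs d. \<forall>p\<in>set ps. evrep s (cl p) = snd p (s |` fst p)}"
    by blast
  ultimately show ?thesis by simp
qed

lemma map_evrep_cls:
  assumes "\<forall>p\<in>set ps. evrep s (cl p) = snd p (s |` fst p)"
  shows "map (evrep (s |` supp a (map cl ps))) (map cl ps) = map (\<lambda>p. snd p (s |` fst p)) ps"
  using assms evrep_restrict[OF rep_cls_subset_supp] by simp

lemma fnI_ext_prod_cls: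
  assumes ps: "\<forall>p\<in>set ps. valid p" and d: "finite d" "a \<subseteq> d" "\<forall>p\<in>set ps. fst p \<subseteq> d"
    and g: "\<forall>s\<in>seqs d. g s = fnI (M (s |` a)) f (map (\<lambda>p. snd p (s |` fst p)) ps)"
  shows "fnI (ext_prod E a M) f (map cl ps) = cl (d, g)"
proof -
  let ?S = "supp a (map cl ps)"
  let ?d = "?S \<union> d"
  let ?F = "\<lambda>s. fnI (M (s |` a)) f (map (evrep s) (map cl ps))"
  have S: "finite ?S" "a \<subseteq> ?S" using finite_supp[OF ps] by (auto simp: supp_def)
  have d': "finite ?d" using S d by simp
  have large: "{s \<in> seqs ?d. \<forall>p\<in>set ps. evrep s (cl p) = snd p (s |` fst p)} \<in> E ?d"
    by (rule evrep_cls_large[OF ps d']) (use d in auto)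
  have "{s \<in> seqs ?d. ?F (s |` ?S) = g (s |` d)} \<in> E ?d"
  proof (rule ultrafilter_on_mono[OF E_ultrafilter[OF d'] large])
    show "{s \<in> seqs ?d. \<forall>p\<in>set ps. evrep s (cl p) = snd p (s |` fst p)}
        \<subseteq> {s \<in> seqs ?d. ?F (s |` ?S) = g (s |` d)}"
    proof (rule subsetI, elim CollectE conjE)
      fix s assume s: "s \<in> seqs ?d" and ev: "\<forall>p\<in>set ps. evrep s (cl p) = snd p (s |` fst p)"
      have "s |` d \<in> seqs d" using seqs_restrict[OF s] by simp
      then have "g (s |` d) = fnI (M (s |` a)) f (map (\<lambda>p. snd p (s |` fst p)) ps)"
        using g d(2,3) by (simp add: Int_absorb1 Int_absorb2 cong: map_cong)
      then show "s \<in> {s \<in> seqs ?d. ?F (s |` ?S) = g (s |` d)}"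
        using s map_evrep_cls[OF ev]
        by (simp add: restrict_restrict_subset[OF S(2)] del: restrict_restrict map_map)
    qed
  qed auto
  then have "eqv E (?S, ?F) (d, g)" using eqv_iff_large[OF d', of "(?S, ?F)" "(d, g)"] by simp
  then show ?thesis
    unfolding ext_prod_def using cls_eqI[of "(?S, ?F)" "(d, g)"] S(1) d(1) by simp
qed

lemma relI_ext_prod_cls:
  assumes ps: "\<forall>p\<in>set ps. valid p" and d: "finite d" "a \<subseteq> d" "\<forall>p\<in>set ps. fst p \<subseteq> d"
  shows "relI (ext_prod E a M) r (map cl ps) \<longleftrightarrow>
    {s \<in> seqs d. relI (M (s |` a)) r (map (\<lambda>p. snd p (s |` fst p)) ps)} \<in> E d"
proof -
  let ?S = "supp a (map cl ps)"
  let ?d = "?S \<union> d"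
  have S: "finite ?S" "a \<subseteq> ?S" using finite_supp[OF ps] by (auto simp: supp_def)
  have d': "finite ?d" using S d by simp
  have large: "{s \<in> seqs ?d. \<forall>p\<in>set ps. evrep s (cl p) = snd p (s |` fst p)} \<in> E ?d"
    by (rule evrep_cls_large[OF ps d']) (use d in auto)
  have "{s \<in> seqs ?S. relI (M (s |` a)) r (map (evrep s) (map cl ps))} \<in> E ?S \<longleftrightarrow>
    {s \<in> seqs d. relI (M (s |` a)) r (map (\<lambda>p. snd p (s |` fst p)) ps)} \<in> E d"
  proof (rule E_transfer[OF d' _ _ large])
    fix s assume "s \<in> {s \<in> seqs ?d. \<forall>p\<in>set ps. evrep s (cl p) = snd p (s |` fst p)}"
    then have "map (evrep (s |` ?S)) (map cl ps) = map (\<lambda>p. snd p (s |` d |` fst p)) ps"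
      using map_evrep_cls d(3) by (simp add: Int_absorb1 cong: map_cong)
    then show "relI (M (s |` ?S |` a)) r (map (evrep (s |` ?S)) (map cl ps)) \<longleftrightarrow>
      relI (M (s |` d |` a)) r (map (\<lambda>p. snd p (s |` d |` fst p)) ps)"
      by (simp add: restrict_restrict_subset[OF S(2)] restrict_restrict_subset[OF d(2)]
          del: restrict_restrict map_map)
  qed auto
  then show ?thesis by (simp add: ext_prod_def)
qed

lemma term_valid:
  assumes c: "finite c" "a \<subseteq> c" and P: "supported_reps D c P" and t: "fvt t \<subseteq> D"
  shows "valid (c, \<lambda>s. evalt (M (s |` a)) (asg_at s P) t)"
proof -
  have "evalt (M (s |` a)) (asg_at s P) t \<in> univ (M (s |` a))" if s: "s \<in> seqs c" for s
  proof (rule evalt_in_univ)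
    have dom: "dom s = c" using s by (simp add: seqs_def)
    show "is_struct (M (s |` a))" using is_struct_at c(2) dom by simp
    show "\<forall>i\<in>fvt t. asg_at s P i \<in> univ (M (s |` a))"
      using P t dom valid_val_in_univ by (auto simp: supported_reps_def asg_at_def)
  qed
  then show ?thesis using c by (simp add: valid_rep_def)
qed

lemma term_los:
  assumes c: "finite c" "a \<subseteq> c" and P: "supported_reps D c P"
  shows "fvt t \<subseteq> D \<Longrightarrow>
    evalt (ext_prod E a M) (cl \<circ> P) t = cl (c, \<lambda>s. evalt (M (s |` a)) (asg_at s P) t)"
proof (induction t)
  case (Var i)
  then have i: "valid (P i)" "fst (P i) \<subseteq> c" using P by (auto simp: supported_reps_def)
  have "{s \<in> seqs c. snd (P i) (s |` fst (P i)) = asg_at (s |` c) P i} = seqs c"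
    using asg_at_restrict[of P i c, OF i(2)] by (auto simp: asg_at_def restrict_seqs_self)
  then have "eqv E (P i) (c, \<lambda>s. asg_at s P i)"
    using eqv_iff_large[OF c(1), of "P i" "(c, \<lambda>s. asg_at s P i)"] i(2)
      ultrafilter_on_top[OF E_ultrafilter[OF c(1)]] by simp
  then show ?case using cls_eqI valid_finite[OF i(1)] c(1) by simp
next
  case (Fn f ts)
  let ?T = "\<lambda>t s. evalt (M (s |` a)) (asg_at s P) t"
  let ?ps = "map (\<lambda>t. (c, ?T t)) ts"
  have ts: "fvt t \<subseteq> D" if "t \<in> set ts" for t using Fn.prems that by auto
  have "map (evalt (ext_prod E a M) (cl \<circ> P)) ts = map cl ?ps"
    using Fn.IH ts by (simp add: comp_def)
  then have "evalt (ext_prod E a M) (cl \<circ> P) (Fn f ts) = fnI (ext_prod E a M) f (map cl ?ps)"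
    by (simp only: evalt.simps)
  also have "\<dots> = cl (c, ?T (Fn f ts))"
  proof (rule fnI_ext_prod_cls)
    show "\<forall>p\<in>set ?ps. valid p" using term_valid[OF c P ts] by auto
    show "\<forall>s\<in>seqs c. ?T (Fn f ts) s = fnI (M (s |` a)) f (map (\<lambda>p. snd p (s |` fst p)) ?ps)"
      by (simp add: restrict_seqs_self comp_def)
  qed (use c in auto)
  finally show ?case .
qed

definition sat_set :: "'l set \<Rightarrow> (nat \<Rightarrow> 'l set \<times> (('l \<rightharpoonup> 'k) \<Rightarrow> 'm)) \<Rightarrow> ('f, 'r, 'k) fm \<Rightarrow> ('l \<rightharpoonup> 'k) set" where
  "sat_set c P \<phi> = {s \<in> seqs c. sat (M (s |` a)) (asg_at s P) \<phi>}"

text \<open>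
  Quantifier steps enlarge the support, so the induction runs over every finite support c
  containing a and the supports of the representatives, not only over the one used in los.
\<close>

definition los_fm :: "('f, 'r, 'k) fm \<Rightarrow> bool" where
  "los_fm \<phi> \<longleftrightarrow> (\<forall>D c P. fv \<phi> \<subseteq> D \<and> finite c \<and> a \<subseteq> c \<and> supported_reps D c P \<longrightarrow>
     (sat (ext_prod E a M) (cl \<circ> P) \<phi> \<longleftrightarrow> sat_set c P \<phi> \<in> E c))"

lemma los_fmI:
  assumes "\<And>D c P. fv \<phi> \<subseteq> D \<Longrightarrow> finite c \<Longrightarrow> a \<subseteq> c \<Longrightarrow> supported_reps D c P \<Longrightarrow>
    sat (ext_prod E a M) (cl \<circ> P) \<phi> \<longleftrightarrow> sat_set c P \<phi> \<in> E c"
  shows "los_fm \<phi>"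
  using assms unfolding los_fm_def by blast

lemma los_fmD:
  "los_fm \<phi> \<Longrightarrow> fv \<phi> \<subseteq> D \<Longrightarrow> finite c \<Longrightarrow> a \<subseteq> c \<Longrightarrow> supported_reps D c P \<Longrightarrow>
    sat (ext_prod E a M) (cl \<circ> P) \<phi> \<longleftrightarrow> sat_set c P \<phi> \<in> E c"
  unfolding los_fm_def by blast

lemma sat_set_subset: "sat_set c P \<phi> \<subseteq> seqs c"
  by (simp add: sat_set_def)

lemma restrict_in_sat_set:
  assumes "fv \<phi> \<subseteq> D" "\<forall>i\<in>D. fst (P i) \<subseteq> c" "a \<subseteq> c"
  shows "s |` c \<in> sat_set c P \<phi> \<longleftrightarrow> c \<subseteq> dom s \<and> sat (M (s |` a)) (asg_at s P) \<phi>"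
proof -
  have "asg_at (s |` c) P i = asg_at s P i" if "i \<in> fv \<phi>" for i
    using assms(1,2) that by (intro asg_at_restrict) blast
  then have "sat (M (s |` a)) (asg_at (s |` c) P) \<phi> = sat (M (s |` a)) (asg_at s P) \<phi>"
    by (intro sat_cong) blast
  then show ?thesis
    by (simp add: sat_set_def restrict_in_seqs_iff restrict_restrict_subset[OF assms(3)]
        del: restrict_restrict)
qed

lemma sat_set_lift:
  assumes "finite d" "c \<subseteq> d" "a \<subseteq> c" "fv \<phi> \<subseteq> D" "\<forall>i\<in>D. fst (P i) \<subseteq> c"
  shows "sat_set c P \<phi> \<in> E c \<longleftrightarrow> sat_set d P \<phi> \<in> E d"
proof -
  have "{s \<in> seqs d. s |` c \<in> sat_set c P \<phi>} = sat_set d P \<phi>"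
    using restrict_in_sat_set[OF assms(4,5,3)] assms(2) by (auto simp: sat_set_def seqs_def)
  then show ?thesis using E_lift_iff[OF assms(1,2) sat_set_subset] by simp
qed

lemma los_fm_Rel: "los_fm (Rel r ts)"
proof (rule los_fmI)
  fix D c P assume D: "fv (Rel r ts) \<subseteq> D" and c: "finite c" "a \<subseteq> c" and P: "supported_reps D c P"
  let ?T = "\<lambda>t s. evalt (M (s |` a)) (asg_at s P) t"
  let ?ps = "map (\<lambda>t. (c, ?T t)) ts"
  have ts: "fvt t \<subseteq> D" if "t \<in> set ts" for t using D that by auto
  have "sat (ext_prod E a M) (cl \<circ> P) (Rel r ts) \<longleftrightarrow> relI (ext_prod E a M) r (map cl ?ps)"
    using term_los[OF c P ts] by (simp cong: map_cong)
  also have "\<dots> \<longleftrightarrow> {s \<in> seqs c. relI (M (s |` a)) r (map (\<lambda>p. snd p (s |` fst p)) ?ps)} \<in> E c"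
    by (rule relI_ext_prod_cls) (use term_valid[OF c P ts] c in auto)
  also have "{s \<in> seqs c. relI (M (s |` a)) r (map (\<lambda>p. snd p (s |` fst p)) ?ps)} = sat_set c P (Rel r ts)"
    by (auto simp: sat_set_def restrict_seqs_self comp_def Int_absorb1[OF c(2)])
  finally show "sat (ext_prod E a M) (cl \<circ> P) (Rel r ts) \<longleftrightarrow> sat_set c P (Rel r ts) \<in> E c" .
qed

lemma los_fm_Eq: "los_fm (Eq t u)"
proof (rule los_fmI)
  fix D c P assume D: "fv (Eq t u) \<subseteq> D" and c: "finite c" "a \<subseteq> c" and P: "supported_reps D c P"
  let ?T = "\<lambda>t s. evalt (M (s |` a)) (asg_at s P) t"
  have t: "fvt t \<subseteq> D" and u: "fvt u \<subseteq> D" using D by auto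
  have "sat (ext_prod E a M) (cl \<circ> P) (Eq t u) \<longleftrightarrow> cl (c, ?T t) = cl (c, ?T u)"
    using term_los[OF c P t] term_los[OF c P u] by simp
  also have "\<dots> \<longleftrightarrow> eqv E (c, ?T t) (c, ?T u)"
    by (rule cls_eq_iff[OF term_valid[OF c P t] term_valid[OF c P u]])
  also have "\<dots> \<longleftrightarrow> {s \<in> seqs c. ?T t (s |` c) = ?T u (s |` c)} \<in> E c"
    by (simp add: eqv_iff_large[OF c(1)] del: restrict_restrict)
  also have "{s \<in> seqs c. ?T t (s |` c) = ?T u (s |` c)} = sat_set c P (Eq t u)"
    by (auto simp: sat_set_def restrict_seqs_self Int_absorb1[OF c(2)])
  finally show "sat (ext_prod E a M) (cl \<circ> P) (Eq t u) \<longleftrightarrow> sat_set c P (Eq t u) \<in> E c" .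
qed

lemma los_fm_Neg: "los_fm \<phi> \<Longrightarrow> los_fm (Neg \<phi>)"
proof (rule los_fmI)
  fix D c P assume \<phi>: "los_fm \<phi>" and D: "fv (Neg \<phi>) \<subseteq> D" and c: "finite c" "a \<subseteq> c"
    and P: "supported_reps D c P"
  have "fv \<phi> \<subseteq> D" using D by simp
  note IH = los_fmD[OF \<phi> this c P]
  have "sat_set c P (Neg \<phi>) = seqs c - sat_set c P \<phi>" by (auto simp: sat_set_def)
  then show "sat (ext_prod E a M) (cl \<circ> P) (Neg \<phi>) \<longleftrightarrow> sat_set c P (Neg \<phi>) \<in> E c"
    using IH ultrafilter_on_Diff_iff[OF E_ultrafilter[OF c(1)] sat_set_subset] by simp
qed

lemma los_fm_BigAnd:
  assumes I: "(card_of I, card_of (UNIV :: 'k set)) \<in> ordLess" and F: "\<forall>i\<in>I. los_fm (F i)"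
  shows "los_fm (BigAnd I F)"
proof (rule los_fmI)
  fix D c P assume D: "fv (BigAnd I F) \<subseteq> D" and c: "finite c" "a \<subseteq> c" and P: "supported_reps D c P"
  have "sat_set c P (BigAnd I F) = seqs c \<inter> (\<Inter>i\<in>I. sat_set c P (F i))" by (auto simp: sat_set_def)
  moreover have "sat (ext_prod E a M) (cl \<circ> P) (F i) \<longleftrightarrow> sat_set c P (F i) \<in> E c" if "i \<in> I" for i
  proof (rule los_fmD[OF _ _ c P])
    show "los_fm (F i)" using F that by blast
    show "fv (F i) \<subseteq> D" using D that by auto
  qed
  ultimately show "sat (ext_prod E a M) (cl \<circ> P) (BigAnd I F) \<longleftrightarrow> sat_set c P (BigAnd I F) \<in> E c"
    using E_INT_iff[OF c(1) I] sat_set_subset by simp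
qed

lemma los_fm_upd:
  assumes \<phi>: "los_fm \<phi>" and D: "fv \<phi> \<subseteq> insert x D" and d: "finite d" "a \<subseteq> d"
    and P: "supported_reps D d P" and q: "valid q" "fst q \<subseteq> d"
  shows "sat (ext_prod E a M) ((cl \<circ> P)(x := cl q)) \<phi> \<longleftrightarrow> sat_set d (P(x := q)) \<phi> \<in> E d"
proof -
  have "supported_reps (insert x D) d (P(x := q))"
    by (rule supported_reps_upd[OF P q])
  then have "sat (ext_prod E a M) (cl \<circ> P(x := q)) \<phi> \<longleftrightarrow> sat_set d (P(x := q)) \<phi> \<in> E d"
    by (rule los_fmD[OF \<phi> D d])
  then show ?thesis by (simp only: fun_upd_comp)
qed

lemma los_fm_Ex:
  assumes \<phi>: "los_fm \<phi>"
  shows "los_fm (Ex x \<phi>)"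
proof (rule los_fmI)
  fix D c P assume D: "fv (Ex x \<phi>) \<subseteq> D" and c: "finite c" "a \<subseteq> c" and P: "supported_reps D c P"
  have Dx: "fv \<phi> \<subseteq> insert x D" using D by auto
  have P_c: "\<forall>i\<in>D. fst (P i) \<subseteq> c" using P by (simp add: supported_reps_def)
  show "sat (ext_prod E a M) (cl \<circ> P) (Ex x \<phi>) \<longleftrightarrow> sat_set c P (Ex x \<phi>) \<in> E c"
  proof
    assume "sat (ext_prod E a M) (cl \<circ> P) (Ex x \<phi>)"
    then obtain q where q: "valid q" and sat_q: "sat (ext_prod E a M) ((cl \<circ> P)(x := cl q)) \<phi>"
      by (auto elim: univ_ext_prodE)
    let ?d = "c \<union> fst q"
    have d: "finite ?d" "a \<subseteq> ?d" using c valid_finite[OF q] by auto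
    have "sat_set ?d (P(x := q)) \<phi> \<subseteq> sat_set ?d P (Ex x \<phi>)"
    proof
      fix s assume "s \<in> sat_set ?d (P(x := q)) \<phi>"
      then have s: "s \<in> seqs ?d" and "sat (M (s |` a)) ((asg_at s P)(x := snd q (s |` fst q))) \<phi>"
        by (simp_all add: sat_set_def asg_at_upd)
      moreover have "snd q (s |` fst q) \<in> univ (M (s |` a))"
        using valid_val_in_univ[OF q] s by (simp add: seqs_def)
      ultimately show "s \<in> sat_set ?d P (Ex x \<phi>)" by (auto simp: sat_set_def)
    qed
    moreover have "sat_set ?d (P(x := q)) \<phi> \<in> E ?d"
      using los_fm_upd[OF \<phi> Dx d supported_reps_mono[OF P Un_upper1] q Un_upper2] sat_q by simp
    ultimately have "sat_set ?d P (Ex x \<phi>) \<in> E ?d"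
      using ultrafilter_on_mono[OF E_ultrafilter[OF d(1)] _ _ sat_set_subset] by blast
    then show "sat_set c P (Ex x \<phi>) \<in> E c" using sat_set_lift[OF d(1) _ c(2) D P_c] by simp
  next
    assume large: "sat_set c P (Ex x \<phi>) \<in> E c"
    obtain w where q: "valid (c, w)"
      and w: "\<forall>s\<in>sat_set c P (Ex x \<phi>). sat (M (s |` a)) ((asg_at s P)(x := w s)) \<phi>"
      by (rule valid_rep_choice[OF c sat_set_subset[of c P "Ex x \<phi>"],
            where R = "\<lambda>s m. sat (M (s |` a)) ((asg_at s P)(x := m)) \<phi>"])
        (auto simp: sat_set_def)
    have "sat_set c P (Ex x \<phi>) \<subseteq> sat_set c (P(x := (c, w))) \<phi>"
      using w by (auto simp: sat_set_def asg_at_upd restrict_seqs_self)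
    then have "sat_set c (P(x := (c, w))) \<phi> \<in> E c"
      using ultrafilter_on_mono[OF E_ultrafilter[OF c(1)] large _ sat_set_subset] by blast
    then have "sat (ext_prod E a M) ((cl \<circ> P)(x := cl (c, w))) \<phi>"
      using los_fm_upd[OF \<phi> Dx c P q] by simp
    then show "sat (ext_prod E a M) (cl \<circ> P) (Ex x \<phi>)" using cls_in_univ[OF q] by auto
  qed
qed

lemma los_fm_upd2:
  assumes \<phi>: "los_fm \<phi>" and D: "fv \<phi> \<subseteq> insert x (insert y D)" and d: "finite d" "a \<subseteq> d"
    and P: "supported_reps D d P" and q: "valid q1" "valid q2" "fst q1 \<subseteq> d" "fst q2 \<subseteq> d"
  shows "sat (ext_prod E a M) ((cl \<circ> P)(x := cl q1, y := cl q2)) \<phi> \<longleftrightarrow>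
    sat_set d (P(x := q1, y := q2)) \<phi> \<in> E d"
proof -
  have "supported_reps (insert y (insert x D)) d (P(x := q1, y := q2))"
    by (intro supported_reps_upd) (use P q in auto)
  then have "sat (ext_prod E a M) (cl \<circ> P(x := q1, y := q2)) \<phi> \<longleftrightarrow>
      sat_set d (P(x := q1, y := q2)) \<phi> \<in> E d"
    by (rule los_fmD[OF \<phi> D[unfolded insert_commute[of x]] d])
  then show ?thesis by (simp only: fun_upd_comp)
qed

lemma los_fm_QWF_large:
  assumes \<phi>: "los_fm \<phi>" and D: "fv (QWF x y \<phi>) \<subseteq> D" and c: "finite c" "a \<subseteq> c"
    and P: "supported_reps D c P" and sat_QWF: "sat (ext_prod E a M) (cl \<circ> P) (QWF x y \<phi>)"
  shows "sat_set c P (QWF x y \<phi>) \<in> E c"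
proof (rule ccontr)
  assume "sat_set c P (QWF x y \<phi>) \<notin> E c"
  then have B: "seqs c - sat_set c P (QWF x y \<phi>) \<in> E c" (is "?B \<in> E c")
    using ultrafilter_on_Diff_iff[OF E_ultrafilter[OF c(1)] sat_set_subset] by blast
  obtain G where q: "\<And>j. valid (c, \<lambda>s. G s j)"
    and G: "\<forall>s\<in>?B. \<forall>j. sat (M (s |` a)) ((asg_at s P)(x := G s (Suc j), y := G s j)) \<phi>"
    by (rule valid_rep_seq_choice[OF c, of ?B,
          where R = "\<lambda>s G. \<forall>j. sat (M (s |` a)) ((asg_at s P)(x := G (Suc j), y := G j)) \<phi>"])
      (auto simp: sat_set_def)
  let ?q = "\<lambda>j. (c, \<lambda>s. G s j)"
  have Dxy: "fv \<phi> \<subseteq> insert x (insert y D)" using D by auto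
  have "sat (ext_prod E a M) ((cl \<circ> P)(x := cl (?q (Suc j)), y := cl (?q j))) \<phi>" for j
  proof -
    have "?B \<subseteq> sat_set c (P(x := ?q (Suc j), y := ?q j)) \<phi>"
    proof
      fix s assume s: "s \<in> ?B"
      then have "s \<in> seqs c" by blast
      with G s show "s \<in> sat_set c (P(x := ?q (Suc j), y := ?q j)) \<phi>"
        by (simp add: sat_set_def asg_at_upd restrict_seqs_self)
    qed
    then have "sat_set c (P(x := ?q (Suc j), y := ?q j)) \<phi> \<in> E c"
      using ultrafilter_on_mono[OF E_ultrafilter[OF c(1)] B _ sat_set_subset] by blast
    then show ?thesis using los_fm_upd2[OF \<phi> Dxy c P q q] by simp
  qed
  moreover have "cl (?q j) \<in> univ (ext_prod E a M)" for j using q by (rule cls_in_univ)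
  ultimately have "\<exists>g. (\<forall>j. g j \<in> univ (ext_prod E a M)) \<and>
      (\<forall>j. sat (ext_prod E a M) ((cl \<circ> P)(x := g (Suc j), y := g j)) \<phi>)"
    by (intro exI[of _ "\<lambda>j. cl (?q j)"]) blast
  then show False using sat_QWF by simp
qed

lemma los_fm_QWF_sat:
  assumes wf: "E_wellfounded E" and \<phi>: "los_fm \<phi>" and D: "fv (QWF x y \<phi>) \<subseteq> D"
    and c: "finite c" "a \<subseteq> c" and P: "supported_reps D c P"
    and large: "sat_set c P (QWF x y \<phi>) \<in> E c"
  shows "sat (ext_prod E a M) (cl \<circ> P) (QWF x y \<phi>)"
proof (unfold sat.simps, rule notI, elim exE conjE)
  fix g assume g_univ: "\<forall>j. g j \<in> univ (ext_prod E a M)"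
    and g_desc: "\<forall>j. sat (ext_prod E a M) ((cl \<circ> P)(x := g (Suc j), y := g j)) \<phi>"
  have "\<exists>p. valid p \<and> g j = cl p" for j
    using g_univ[rule_format, of j] by (rule univ_ext_prodE) blast
  then obtain q where q: "\<And>j. valid (q j)" and g_q: "\<And>j. g j = cl (q j)"
    by metis
  define d where "d j = c \<union> fst (q (Suc j)) \<union> fst (q j)" for j
  let ?P = "\<lambda>j. P(x := q (Suc j), y := q j)"
  have Dxy: "fv \<phi> \<subseteq> insert x (insert y D)" using D by auto
  have d: "finite (d j)" "a \<subseteq> d j" "c \<subseteq> d j" for j
    using c q valid_finite by (auto simp: d_def)
  have P_d: "\<forall>i\<in>insert x (insert y D). fst (?P j i) \<subseteq> d j" for j
    using P by (auto simp: d_def supported_reps_def)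
  have "sat_set (d j) (?P j) \<phi> \<in> E (d j)" for j
    using g_desc[rule_format, of j]
      los_fm_upd2[OF \<phi> Dxy d(1,2)[of j] supported_reps_mono[OF P d(3)[of j]] q[of "Suc j"] q[of j]]
    by (auto simp: g_q d_def)
  then obtain h where h_c: "h |` c \<in> sat_set c P (QWF x y \<phi>)"
    and h_d: "\<And>j. h |` d j \<in> sat_set (d j) (?P j) \<phi>"
    using E_wellfounded_cons[OF wf c(1) large, of d "\<lambda>j. sat_set (d j) (?P j) \<phi>"] d(1) by blast
  \<comment> \<open>at h the factor contains the descending sequence given by the representatives\<close>
  let ?H = "\<lambda>j. snd (q j) (h |` fst (q j))"
  have "\<forall>i\<in>D. fst (P i) \<subseteq> c" using P by (simp add: supported_reps_def)
  then have "sat (M (h |` a)) (asg_at h P) (QWF x y \<phi>)"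
    using restrict_in_sat_set[OF D _ c(2)] h_c by blast
  moreover have "?H j \<in> univ (M (h |` a))"
    and "sat (M (h |` a)) ((asg_at h P)(x := ?H (Suc j), y := ?H j)) \<phi>" for j
  proof -
    have "d j \<subseteq> dom h" "sat (M (h |` a)) (asg_at h (?P j)) \<phi>"
      using restrict_in_sat_set[OF Dxy P_d d(2)] h_d by blast+
    then show "?H j \<in> univ (M (h |` a))"
      "sat (M (h |` a)) ((asg_at h P)(x := ?H (Suc j), y := ?H j)) \<phi>"
      using valid_val_in_univ q by (auto simp: d_def asg_at_upd)
  qed
  ultimately show False
    by (simp only: sat.simps) (blast intro: exI[of _ ?H])
qed

lemma los_fm_QWF:
  assumes "E_wellfounded E" "los_fm \<phi>"
  shows "los_fm (QWF x y \<phi>)"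
proof (rule los_fmI)
  fix D c P assume hyps: "fv (QWF x y \<phi>) \<subseteq> D" "finite c" "a \<subseteq> c" "supported_reps D c P"
  show "sat (ext_prod E a M) (cl \<circ> P) (QWF x y \<phi>) \<longleftrightarrow> sat_set c P (QWF x y \<phi>) \<in> E c"
    using los_fm_QWF_large[OF assms(2) hyps] los_fm_QWF_sat[OF assms hyps] by blast
qed

lemma los_fm_of_wff: "E_wellfounded E \<Longrightarrow> wff \<phi> \<Longrightarrow> los_fm \<phi>"
proof (induction \<phi>)
  case (BigAnd I F)
  then show ?case by (auto intro: los_fm_BigAnd)
qed (auto intro: los_fm_Rel los_fm_Eq los_fm_Neg los_fm_Ex los_fm_QWF)

lemma los_of_wellfounded: "E_wellfounded E \<Longrightarrow> los E a M"
  unfolding los_def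
proof (intro allI impI, elim conjE)
  fix \<phi> :: "('f, 'r, 'k) fm" and ps
  assume wf: "E_wellfounded E" and \<phi>: "wff \<phi>" "fv \<phi> \<subseteq> {..<length ps}" and ps: "\<forall>p\<in>set ps. valid p"
  let ?c = "a \<union> \<Union> (set (map fst ps))"
  have "finite ?c" using finite_a ps valid_finite by auto
  moreover have "supported_reps {..<length ps} ?c (\<lambda>i. ps ! i)"
    using ps by (auto simp: supported_reps_def)
  ultimately have "sat (ext_prod E a M) (cl \<circ> (\<lambda>i. ps ! i)) \<phi> \<longleftrightarrow> sat_set ?c (\<lambda>i. ps ! i) \<phi> \<in> E ?c"
    using los_fmD[OF los_fm_of_wff[OF wf \<phi>(1)] \<phi>(2)] by blast
  then show "sat (ext_prod E a M) (\<lambda>i. cl (ps ! i)) \<phi> \<longleftrightarrow>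
      {s \<in> seqs ?c. sat (M (s |` a)) (\<lambda>i. snd (ps ! i) (s |` fst (ps ! i))) \<phi>} \<in> E ?c"
    by (simp add: comp_def sat_set_def asg_at_def[abs_def])
qed

end

context coherent_extender
begin

lemma wellfounded_los:
  assumes "E_wellfounded E" "finite a" "\<forall>s\<in>seqs a. is_struct (M s)"
  shows "los E a M"
proof -
  interpret extender_product E a M by unfold_locales (fact assms)+
  show ?thesis by (rule los_of_wellfounded[OF assms(1)])
qed

end

section \<open>Failure of Los's theorem for ill-founded extenders\<close>

lemma map_chain_restrict:
  fixes f :: "nat \<Rightarrow> 'a \<rightharpoonup> 'b"
  assumes mono: "\<And>j. B j \<subseteq> B (Suc j)" and dom: "\<And>j. dom (f j) = B j"
    and compat: "\<And>j. f (Suc j) |` B j = f j" and "j \<le> k"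
  shows "f k |` B j = f j"
  using \<open>j \<le> k\<close>
proof (induction k rule: dec_induct)
  case base
  show ?case using restrict_seqs_self[of "f j" "B j"] dom by (simp add: seqs_def)
next
  case (step k)
  have "B j \<subseteq> B k" using lift_Suc_mono_le[of B, OF mono step(1)] .
  then have "f (Suc k) |` B j = f (Suc k) |` B k |` B j" by (simp add: Int_absorb1)
  then show ?case using compat[of k] step(3) by simp
qed

lemma map_chain_union:
  fixes f :: "nat \<Rightarrow> 'a \<rightharpoonup> 'b"
  assumes mono: "\<And>j. B j \<subseteq> B (Suc j)" and dom: "\<And>j. dom (f j) = B j"
    and compat: "\<And>j. f (Suc j) |` B j = f j"
  shows "\<exists>h. dom h = (\<Union>j. B j) \<and> (\<forall>j. h |` B j = f j)"
proof -
  note restrict = map_chain_restrict[of B f, OF mono dom compat]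
  have agree: "f j l = f k l" if "l \<in> B j" "l \<in> B k" for j k l
  proof -
    have "f j l = (f (max j k) |` B j) l" using restrict[of j "max j k"] by simp
    also have "\<dots> = (f (max j k) |` B k) l" using that by simp
    also have "\<dots> = f k l" using restrict[of k "max j k"] by simp
    finally show ?thesis .
  qed
  define h where "h l = f (SOME j. l \<in> B j) l" for l
  have h_B: "h |` B j = f j" for j
  proof
    fix l
    show "(h |` B j) l = f j l"
    proof (cases "l \<in> B j")
      case True
      then have "l \<in> B (SOME j. l \<in> B j)" by (rule someI)
      then show ?thesis using True agree[OF True] by (simp add: h_def)
    next
      case False
      then have "l \<notin> dom (f j)" using dom by simp
      then show ?thesis using False by (simp add: domIff)
    qed
  qed
  have "dom h = (\<Union>j. B j)"
  proof
    show "dom h \<subseteq> (\<Union>j. B j)"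
    proof
      fix l assume "l \<in> dom h"
      then have "l \<in> dom (f (SOME j. l \<in> B j))" by (simp add: h_def dom_def)
      then show "l \<in> (\<Union>j. B j)" using dom by blast
    qed
    show "(\<Union>j. B j) \<subseteq> dom h"
    proof
      fix l assume "l \<in> (\<Union>j. B j)"
      then obtain j where "l \<in> B j" by blast
      then have "h l = f j l" using h_B[of j] by (metis restrict_in)
      moreover have "l \<in> dom (f j)" using \<open>l \<in> B j\<close> dom by simp
      ultimately show "l \<in> dom h" by (simp add: domIff)
    qed
  qed
  then show ?thesis using h_B by blast
qed

definition threads :: "(nat \<Rightarrow> 'l set) \<Rightarrow> (nat \<Rightarrow> ('l \<rightharpoonup> 'k) set) \<Rightarrow> nat \<Rightarrow> ('l \<rightharpoonup> 'k) set" where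
  "threads A X n = {s \<in> seqs (\<Union>i\<le>n. A i). \<forall>i\<le>n. s |` A i \<in> X i}"

lemma threads_restrict:
  assumes "t \<in> threads A X (Suc n)"
  shows "t |` (\<Union>i\<le>n. A i) \<in> threads A X n"
proof -
  have "(\<Union>i\<le>n. A i) \<subseteq> (\<Union>i\<le>Suc n. A i)" by (auto simp: atMost_Suc)
  moreover have "t |` (\<Union>i\<le>n. A i) |` A i = t |` A i" if "i \<le> n" for i
    using that by (intro restrict_restrict_subset) blast
  ultimately show ?thesis using assms by (auto simp: threads_def intro: seqs_restrict)
qed

lemma thread_branch_extends:
  assumes "\<forall>j. sq j \<in> threads A X (m + j) \<and> sq (Suc j) |` (\<Union>i\<le>m + j. A i) = sq j"
  shows "\<exists>h. dom h = (\<Union>n. A n) \<and> (\<forall>n. h |` A n \<in> X n)"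
proof -
  let ?B = "\<lambda>j. \<Union>i\<le>m + j. A i"
  have mono: "?B j \<subseteq> ?B (Suc j)" for j by (intro UN_mono) auto
  have dom: "dom (sq j) = ?B j" for j using assms by (simp add: threads_def seqs_def)
  have compat: "sq (Suc j) |` ?B j = sq j" for j using assms by blast
  obtain h where h: "dom h = (\<Union>j. ?B j)" "\<And>j. h |` ?B j = sq j"
    using map_chain_union[of ?B sq, OF mono dom compat] by blast
  have A_B: "A n \<subseteq> ?B n" for n by (rule UN_upper) simp
  have "(\<Union>j. ?B j) = (\<Union>n. A n)"
  proof
    show "(\<Union>j. ?B j) \<subseteq> (\<Union>n. A n)" by blast
    show "(\<Union>n. A n) \<subseteq> (\<Union>j. ?B j)" using A_B by blast
  qed
  then have "dom h = (\<Union>n. A n)" using h(1) by simp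
  moreover have "h |` A n \<in> X n" for n
  proof -
    have "h |` A n = sq n |` A n" using restrict_restrict_subset[OF A_B[of n], of h] h(2) by simp
    moreover have "sq n \<in> threads A X (m + n)" using assms by blast
    ultimately show ?thesis unfolding threads_def using le_add2[of n m] by simp
  qed
  ultimately show ?thesis by blast
qed

text \<open>
  Only pairs (n, t) with t a thread of level n are related, so the whole type can serve as
  universe; a descending chain is an infinite branch through the tree of threads.
\<close>

definition thread_struct ::
  "(nat \<Rightarrow> 'l set) \<Rightarrow> (nat \<Rightarrow> ('l \<rightharpoonup> 'k) set) \<Rightarrow> (nat, nat, nat \<times> ('l \<rightharpoonup> 'k)) struct" where
  "thread_struct A X = Struct UNIV (\<lambda>_ _. undefined)
     (\<lambda>_ xs. \<exists>n t. xs = [(Suc n, t), (n, t |` (\<Union>i\<le>n. A i))] \<and> t \<in> threads A X (Suc n))"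

lemma is_struct_thread_struct: "is_struct (thread_struct A X)"
  by (simp add: is_struct_def thread_struct_def)

lemma thread_struct_wellfounded:
  assumes "\<not> (\<exists>h. dom h = (\<Union>n. A n) \<and> (\<forall>n. h |` A n \<in> X n))"
  shows "sat (thread_struct A X) v (QWF 0 1 (Rel 0 [Var 0, Var 1]))"
proof (unfold sat.simps(6), rule notI, elim exE conjE)
  fix g assume "\<forall>j. g j \<in> univ (thread_struct A X)"
    and "\<forall>j. sat (thread_struct A X) (v(0 := g (Suc j), 1 := g j)) (Rel 0 [Var 0, Var 1])"
  then have R: "\<exists>n t. g (Suc j) = (Suc n, t) \<and> g j = (n, t |` (\<Union>i\<le>n. A i)) \<and> t \<in> threads A X (Suc n)"
    for j by (simp add: thread_struct_def)
  have step: "fst (g (Suc j)) = Suc (fst (g j))"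
    "snd (g j) = snd (g (Suc j)) |` (\<Union>i\<le>fst (g j). A i)"
    "snd (g (Suc j)) \<in> threads A X (Suc (fst (g j)))" for j
    using R[of j] by auto
  have level: "fst (g j) = fst (g 0) + j" for j
    by (induction j) (simp_all add: step(1))
  have "snd (g j) \<in> threads A X (fst (g 0) + j)" for j
    using threads_restrict[OF step(3)[of j]] step(2)[of j, symmetric] level[of j] by simp
  moreover have "snd (g (Suc j)) |` (\<Union>i\<le>fst (g 0) + j. A i) = snd (g j)" for j
    using step(2)[of j] level[of j] by simp
  ultimately have "\<forall>j. snd (g j) \<in> threads A X (fst (g 0) + j) \<and>
      snd (g (Suc j)) |` (\<Union>i\<le>fst (g 0) + j. A i) = snd (g j)"
    by blast
  from thread_branch_extends[where sq = "\<lambda>j. snd (g j)" and m = "fst (g 0)", OF this]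
  show False using assms by blast
qed

context coherent_extender
begin

lemma threads_large:
  assumes AX: "\<forall>n. finite (A n) \<and> X n \<in> E (A n)"
  shows "threads A X n \<in> E (\<Union>i\<le>n. A i)"
proof -
  let ?B = "\<Union>i\<le>n. A i"
  have B: "finite ?B" using AX by auto
  have "{s \<in> seqs ?B. s |` A i \<in> X i} \<in> E ?B" if "i \<le> n" for i
    using AX E_lift_iff[OF B _ ultrafilter_on_subset[OF E_ultrafilter]] that by blast
  then have "seqs ?B \<inter> (\<Inter>i\<in>{..n}. {s \<in> seqs ?B. s |` A i \<in> X i}) \<in> E ?B"
    by (intro ultrafilter_on_INT[OF E_ultrafilter[OF B]]) auto
  moreover have "seqs ?B \<inter> (\<Inter>i\<in>{..n}. {s \<in> seqs ?B. s |` A i \<in> X i}) = threads A X n"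
    by (auto simp: threads_def)
  ultimately show ?thesis by simp
qed

lemma thread_rel_large:
  assumes AX: "\<forall>n. finite (A n) \<and> X n \<in> E (A n)"
  shows "{s \<in> seqs (\<Union>i\<le>Suc j. A i). relI (thread_struct A X) r [(Suc j, s), (j, s |` (\<Union>i\<le>j. A i))]}
    \<in> E (\<Union>i\<le>Suc j. A i)"
proof (rule ultrafilter_on_mono[OF E_ultrafilter threads_large[OF AX]])
  show "finite (\<Union>i\<le>Suc j. A i)" using AX by auto
  show "threads A X (Suc j) \<subseteq>
    {s \<in> seqs (\<Union>i\<le>Suc j. A i). relI (thread_struct A X) r [(Suc j, s), (j, s |` (\<Union>i\<le>j. A i))]}"
  proof
    fix s assume s: "s \<in> threads A X (Suc j)"
    then have "s \<in> seqs (\<Union>i\<le>Suc j. A i)" by (simp add: threads_def)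
    then show "s \<in> {s \<in> seqs (\<Union>i\<le>Suc j. A i).
        relI (thread_struct A X) r [(Suc j, s), (j, s |` (\<Union>i\<le>j. A i))]}"
      using s by (auto simp: thread_struct_def)
  qed
qed auto

lemma not_los_thread_struct:
  assumes AX: "\<forall>n. finite (A n) \<and> X n \<in> E (A n)"
    and no_thread: "\<not> (\<exists>h. dom h = (\<Union>n. A n) \<and> (\<forall>n. h |` A n \<in> X n))"
  shows "\<not> los E {} (\<lambda>_. thread_struct A X)"
proof
  let ?M = "\<lambda>_ :: 'l \<rightharpoonup> 'k. thread_struct A X"
  let ?N = "ext_prod E {} ?M"
  let ?cl = "cls E {} ?M"
  let ?B = "\<lambda>n. \<Union>i\<le>n. A i"
  define \<phi> where "\<phi> = (Rel 0 [Var 0, Var 1] :: (nat, nat, 'k) fm)"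
  assume "los E {} ?M"
  then have los: "sat ?N (\<lambda>i. ?cl (ps ! i)) \<psi> \<longleftrightarrow>
      {s \<in> seqs ({} \<union> \<Union> (set (map fst ps))). sat (thread_struct A X) (\<lambda>i. snd (ps ! i) (s |` fst (ps ! i))) \<psi>}
        \<in> E ({} \<union> \<Union> (set (map fst ps)))"
    if "wff \<psi>" "fv \<psi> \<subseteq> {..<length ps}" "\<forall>p\<in>set ps. valid_rep E {} ?M p"
    for \<psi> :: "(nat, nat, 'k) fm" and ps
    using that unfolding los_def by blast
  have wf: "sat ?N (\<lambda>i. ?cl ([] ! i)) (QWF 0 1 \<phi>)"
    using los[of "QWF 0 1 \<phi>" "[]"] thread_struct_wellfounded[OF no_thread]
      ultrafilter_on_top[OF E_ultrafilter[of "{}"]] by (simp add: \<phi>_def)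
  define p where "p j = (?B j, \<lambda>s :: 'l \<rightharpoonup> 'k. (j, s))" for j
  have p: "valid_rep E {} ?M (p j)" for j
    using AX by (simp add: valid_rep_def p_def thread_struct_def)
  have "sat ?N (\<lambda>i. ?cl ([p (Suc j), p j] ! i)) \<phi>" for j
  proof -
    have "?B j \<subseteq> ?B (Suc j)" by (auto simp: atMost_Suc)
    then have B: "{} \<union> \<Union> (set (map fst [p (Suc j), p j])) = ?B (Suc j)" by (auto simp: p_def)
    have "{s \<in> seqs (?B (Suc j)).
        sat (thread_struct A X) (\<lambda>i. snd ([p (Suc j), p j] ! i) (s |` fst ([p (Suc j), p j] ! i))) \<phi>}
      = {s \<in> seqs (?B (Suc j)). relI (thread_struct A X) 0 [(Suc j, s), (j, s |` ?B j)]}"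
      by (rule Collect_cong) (auto simp: \<phi>_def p_def restrict_seqs_self)
    moreover have "wff \<phi>" "fv \<phi> \<subseteq> {..<length [p (Suc j), p j]}" by (simp_all add: \<phi>_def)
    ultimately show ?thesis
      using los[of \<phi> "[p (Suc j), p j]"] p thread_rel_large[OF AX] unfolding B by simp
  qed
  then have "sat ?N ((\<lambda>i. ?cl ([] ! i))(0 := ?cl (p (Suc j)), 1 := ?cl (p j))) \<phi>" for j
    by (rule iffD1[OF sat_cong, rotated]) (auto simp: \<phi>_def)
  moreover have "?cl (p j) \<in> univ ?N" for j
    using p[of j] by (simp only: ext_prod_def prod_univ_def struct.sel mem_Collect_eq) blast
  ultimately have "\<exists>g. (\<forall>j. g j \<in> univ ?N) \<and>
      (\<forall>j. sat ?N ((\<lambda>i. ?cl ([] ! i))(0 := g (Suc j), 1 := g j)) \<phi>)"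
    by (intro exI[of _ "\<lambda>j. ?cl (p j)"]) blast
  with wf show False by (simp only: sat.simps(6)) blast
qed

lemma not_wellfounded_not_los:
  assumes "\<not> E_wellfounded E"
  shows "\<exists>a (M :: ('l \<rightharpoonup> 'k) \<Rightarrow> (nat, nat, nat \<times> ('l \<rightharpoonup> 'k)) struct).
    finite a \<and> (\<forall>s\<in>seqs a. is_struct (M s)) \<and> \<not> los E a M"
proof -
  obtain A :: "nat \<Rightarrow> 'l set" and X where AX: "\<forall>n. finite (A n) \<and> X n \<in> E (A n)"
    and no_thread: "\<not> (\<exists>h. dom h = (\<Union>n. A n) \<and> (\<forall>n. h |` A n \<in> X n))"
    using assms unfolding E_wellfounded_def by blast
  show ?thesis
    using not_los_thread_struct[OF AX no_thread]
    by (intro exI[of _ "{}"] exI[of _ "\<lambda>_. thread_struct A X"]) (simp add: is_struct_thread_struct)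
qed

end

theorem proposition5p3:
  fixes E :: "'l set \<Rightarrow> ('l \<rightharpoonup> 'k) set set"
  assumes "extender_system E"
    and "coherent E"
  shows "(E_wellfounded E \<longrightarrow>
            (\<forall>a (M :: ('l \<rightharpoonup> 'k) \<Rightarrow> ('f, 'r, 'm) struct).
               finite a \<and> (\<forall>s\<in>seqs a. is_struct (M s)) \<longrightarrow> los E a M))
       \<and> (E_wellfounded E \<longleftrightarrow>
            (\<forall>a (M :: ('l \<rightharpoonup> 'k) \<Rightarrow> (nat, nat, nat \<times> ('l \<rightharpoonup> 'k)) struct).
               finite a \<and> (\<forall>s\<in>seqs a. is_struct (M s)) \<longrightarrow> los E a M))"
proof -
  interpret coherent_extender E by unfold_locales (fact assms)+
  have "E_wellfounded E \<longrightarrow>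
      (\<forall>a (M :: ('l \<rightharpoonup> 'k) \<Rightarrow> ('f, 'r, 'm) struct).
        finite a \<and> (\<forall>s\<in>seqs a. is_struct (M s)) \<longrightarrow> los E a M)"
    using wellfounded_los by blast
  moreover have "E_wellfounded E \<longleftrightarrow>
      (\<forall>a (M :: ('l \<rightharpoonup> 'k) \<Rightarrow> (nat, nat, nat \<times> ('l \<rightharpoonup> 'k)) struct).
        finite a \<and> (\<forall>s\<in>seqs a. is_struct (M s)) \<longrightarrow> los E a M)"
    using wellfounded_los not_wellfounded_not_los by blast
  ultimately show ?thesis ..
qed

end
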